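(* Let $\mathbf{S}'=\sum_{i=1}^N\mathbf{S}'_i$ be a PBD that is in $1/\epsilon$-heavy binomial form, and let $a\in\mathbb{Z}_+$, $b\in\mathbb{Z}$. With probability at least $1-O(\sqrt{\epsilon})$, the greatest common divisor of $m=\Omega(1/\sqrt{\epsilon})$ i.i.d. draws $v_1,\dots,v_m$ from $a(\mathbf{S}'-b)$ is equal to $a$.
   Context: A PBD$_N$ is a sum of $N$ mutually independent Bernoulli random variables. A PBD$_N$ $\mathbf{S}$ is in $1/\epsilon$-heavy binomial form if $\mathbf{S}$ is $\epsilon$-close in total variation distance to some distribution $u+\mathrm{Bin}(\ell,q)$ where $u,\ell\in\{0,1,\dots,N\}$ and $\mathrm{Var}[\mathrm{Bin}(\ell,q)]=\Omega(1/\epsilon^2)$. Throughout, $\epsilon$ is assumed to be at most a sufficiently small absolute constant. *)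

theory Defs
  imports "HOL-Probability.Probability"
begin

fun pbd :: "real list \<Rightarrow> nat pmf" where
  "pbd [] = return_pmf 0"
| "pbd (p # ps) =
     bind_pmf (bernoulli_pmf p) (\<lambda>x. bind_pmf (pbd ps) (\<lambda>y. return_pmf (of_bool x + y)))"

definition tv_dist :: "'a pmf \<Rightarrow> 'a pmf \<Rightarrow> real" where
  "tv_dist P Q = (SUP A. \<bar>measure_pmf.prob P A - measure_pmf.prob Q A\<bar>)"

text \<open>S (a PBD on N summands) is in 1/eps-heavy binomial form, where the implicit
  constant of Var = Omega(1/eps^2) is c0.\<close>
definition heavy_binomial_form :: "real \<Rightarrow> real \<Rightarrow> nat \<Rightarrow> nat pmf \<Rightarrow> bool" where
  "heavy_binomial_form c0 eps N S \<longleftrightarrow>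
     (\<exists>u l q. u \<le> N \<and> l \<le> N \<and> 0 \<le> q \<and> q \<le> 1 \<and>
        tv_dist S (map_pmf (\<lambda>k. u + k) (binomial_pmf l q)) \<le> eps \<and>
        real l * q * (1 - q) \<ge> c0 / eps\<^sup>2)"

end

(*
  Up to total variation 2 eps, a pair of samples of S' behaves like a pair of draws
  u + Bin(l, q) whose standard deviation s is at least 2^60.  Two such draws k, k' are
  coprime after the common shift by b - u with probability at least 1/16: otherwise one
  of them lies outside the Chebyshev window |k - l q| <= 4 s, or k = k' (probability
  at most the maximal pmf value, O(1/s)), or both lie in the window in a common
  residue class modulo some 2 <= d <= 8 s.  The binomial pmf is unimodal with maximum
  O(1/s), so shifting an event by one changes its probability by O(1/s), which bounds
  every residue class mod d by 1/d + O(d/s); within the window it also has at most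
  O(s/d) points.  Summing the squares of these bounds over d gives at most 25/32.
  Hence each of the m/2 disjoint pairs among the samples has gcd exactly a with
  probability at least 1/32, independently, and all of them fail with probability at
  most (31/32)^(m/2) = O(sqrt eps).
*)
theory Submission
  imports Defs
begin

section \<open>Finite probability mass functions\<close>

lemma measure_pmf_eq_sum_indicator:
  fixes M :: "'a pmf"
  assumes "finite F" "set_pmf M \<subseteq> F"
  shows "measure_pmf.prob M X = (\<Sum>y\<in>F. pmf M y * indicator X y)"
proof -
  have "measure_pmf.prob M X = measure_pmf.prob M (X \<inter> F)"
    using assms(2) by (intro measure_prob_cong_0) (auto simp: set_pmf_eq)
  also have "\<dots> = sum (pmf M) (X \<inter> F)"
    using assms(1) by (simp add: measure_measure_pmf_finite)
  also have "\<dots> = (\<Sum>y\<in>F. pmf M y * indicator X y)"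
    using assms(1) by (simp add: sum.inter_restrict indicator_def Int_commute)
  finally show ?thesis .
qed

lemma measure_pair_pmf_Times:
  "measure_pmf.prob (pair_pmf A B) (X \<times> Y) = measure_pmf.prob A X * measure_pmf.prob B Y"
proof -
  have "measure_pmf.prob (pair_pmf A B) (X \<times> Y) =
        measure_pmf.prob (pair_pmf A B) ((X \<inter> set_pmf A) \<times> (Y \<inter> set_pmf B))"
    by (subst measure_Int_set_pmf[symmetric]) (simp add: Times_Int_Times)
  also have "\<dots> = measure_pmf.prob A (X \<inter> set_pmf A) * measure_pmf.prob B (Y \<inter> set_pmf B)"
    by (rule measure_pmf_prob_product) (auto intro: countable_subset[OF _ countable_set_pmf])
  also have "\<dots> = measure_pmf.prob A X * measure_pmf.prob B Y"
    by (simp add: measure_Int_set_pmf)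
  finally show ?thesis .
qed

lemma measure_pair_pmf_eq_sums:
  assumes "finite F" "finite H" "set_pmf A \<subseteq> F" "set_pmf C \<subseteq> H"
  shows measure_pair_pmf_eq_sum_fst:
      "measure_pmf.prob (pair_pmf A C) E = (\<Sum>x\<in>F. pmf A x * measure_pmf.prob C {y. (x, y) \<in> E})"
    and measure_pair_pmf_eq_sum_snd:
      "measure_pmf.prob (pair_pmf A C) E = (\<Sum>y\<in>H. pmf C y * measure_pmf.prob A {x. (x, y) \<in> E})"
proof -
  have double_sum: "measure_pmf.prob (pair_pmf A C) E =
      (\<Sum>x\<in>F. \<Sum>y\<in>H. pmf A x * (pmf C y * indicator E (x, y)))"
  proof -
    have "measure_pmf.prob (pair_pmf A C) E = (\<Sum>p\<in>F \<times> H. pmf (pair_pmf A C) p * indicator E p)"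
      by (rule measure_pmf_eq_sum_indicator) (use assms in auto)
    also have "\<dots> = (\<Sum>(x, y)\<in>F \<times> H. pmf A x * (pmf C y * indicator E (x, y)))"
      by (intro sum.cong) (auto simp: pmf_pair)
    also have "\<dots> = (\<Sum>x\<in>F. \<Sum>y\<in>H. pmf A x * (pmf C y * indicator E (x, y)))"
      by (rule sum.cartesian_product[symmetric])
    finally show ?thesis .
  qed
  have inner_fst: "measure_pmf.prob C {y. (x, y) \<in> E} = (\<Sum>y\<in>H. pmf C y * indicator E (x, y))" for x
    by (subst measure_pmf_eq_sum_indicator[OF assms(2,4)]) (simp add: indicator_def)
  have inner_snd: "measure_pmf.prob A {x. (x, y) \<in> E} = (\<Sum>x\<in>F. pmf A x * indicator E (x, y))" for y
    by (subst measure_pmf_eq_sum_indicator[OF assms(1,3)]) (simp add: indicator_def)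
  show "measure_pmf.prob (pair_pmf A C) E = (\<Sum>x\<in>F. pmf A x * measure_pmf.prob C {y. (x, y) \<in> E})"
    by (simp add: double_sum inner_fst sum_distrib_left)
  show "measure_pmf.prob (pair_pmf A C) E = (\<Sum>y\<in>H. pmf C y * measure_pmf.prob A {x. (x, y) \<in> E})"
    by (simp add: double_sum inner_snd sum_distrib_left mult_ac sum.swap[of _ F])
qed

lemma measure_pmf_diff_le_tv_dist:
  "\<bar>measure_pmf.prob P X - measure_pmf.prob Q X\<bar> \<le> tv_dist P Q"
  unfolding tv_dist_def
proof (rule cSUP_upper)
  show "bdd_above (range (\<lambda>A. \<bar>measure_pmf.prob P A - measure_pmf.prob Q A\<bar>))"
  proof (rule bdd_aboveI2)
    fix A
    show "\<bar>measure_pmf.prob P A - measure_pmf.prob Q A\<bar> \<le> 1"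
      using measure_pmf.prob_le_1[of P A] measure_pmf.prob_le_1[of Q A]
        measure_nonneg[of P A] measure_nonneg[of Q A] by linarith
  qed
qed simp

text \<open>Hybrid argument: replace one coordinate at a time.\<close>
lemma measure_pair_pmf_le_tv_dist:
  assumes F: "finite F" "set_pmf P \<subseteq> F" "set_pmf Q \<subseteq> F"
  shows "measure_pmf.prob (pair_pmf P P) E \<le> measure_pmf.prob (pair_pmf Q Q) E + 2 * tv_dist P Q"
proof -
  define e where "e = tv_dist P Q"
  have tv: "\<bar>measure_pmf.prob P X - measure_pmf.prob Q X\<bar> \<le> e" for X
    unfolding e_def by (rule measure_pmf_diff_le_tv_dist)
  have "measure_pmf.prob (pair_pmf P P) E - measure_pmf.prob (pair_pmf Q P) E
      = (\<Sum>y\<in>F. pmf P y * (measure_pmf.prob P {x. (x, y) \<in> E} - measure_pmf.prob Q {x. (x, y) \<in> E}))"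
    by (simp add: measure_pair_pmf_eq_sum_snd[OF F(1,1)] F sum_subtractf[symmetric] right_diff_distrib)
  also have "\<dots> \<le> (\<Sum>y\<in>F. pmf P y * e)"
    using tv by (intro sum_mono mult_left_mono) (auto simp: abs_le_iff)
  also have "\<dots> = measure_pmf.prob P F * e"
    using F(1) by (simp add: sum_distrib_right[symmetric] measure_measure_pmf_finite)
  also have "\<dots> \<le> e"
    using tv[of "{}"] by (intro mult_left_le_one_le) auto
  finally have first: "measure_pmf.prob (pair_pmf P P) E - measure_pmf.prob (pair_pmf Q P) E \<le> e" .
  have "measure_pmf.prob (pair_pmf Q P) E - measure_pmf.prob (pair_pmf Q Q) E
      = (\<Sum>x\<in>F. pmf Q x * (measure_pmf.prob P {y. (x, y) \<in> E} - measure_pmf.prob Q {y. (x, y) \<in> E}))"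
    by (simp add: measure_pair_pmf_eq_sum_fst[OF F(1,1)] F sum_subtractf[symmetric] right_diff_distrib)
  also have "\<dots> \<le> (\<Sum>x\<in>F. pmf Q x * e)"
    using tv by (intro sum_mono mult_left_mono) (auto simp: abs_le_iff)
  also have "\<dots> = measure_pmf.prob Q F * e"
    using F(1) by (simp add: sum_distrib_right[symmetric] measure_measure_pmf_finite)
  also have "\<dots> \<le> e"
    using tv[of "{}"] by (intro mult_left_le_one_le) auto
  finally have second: "measure_pmf.prob (pair_pmf Q P) E - measure_pmf.prob (pair_pmf Q Q) E \<le> e" .
  show ?thesis using first second by (simp add: e_def)
qed

lemma measure_pair_pmf_diagonal_le:
  assumes "finite (set_pmf M)" "\<And>x. pmf M x \<le> B"
  shows "measure_pmf.prob (pair_pmf M M) {p. fst p = snd p} \<le> B"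
proof -
  have "measure_pmf.prob (pair_pmf M M) {p. fst p = snd p} = (\<Sum>x\<in>set_pmf M. pmf M x * pmf M x)"
    by (simp add: measure_pair_pmf_eq_sum_fst[OF assms(1,1) order_refl order_refl] measure_pmf_single)
  also have "\<dots> \<le> (\<Sum>x\<in>set_pmf M. pmf M x * B)"
    by (intro sum_mono mult_left_mono assms(2)) simp
  also have "\<dots> = B"
    using assms(1) by (simp add: sum_distrib_right[symmetric] sum_pmf_eq_1)
  finally show ?thesis .
qed

lemma pmf_le_of_injective_chain:
  fixes M :: "'a pmf"
  assumes "inj_on h {..n}" "\<And>i. i \<le> n \<Longrightarrow> x \<le> 2 * pmf M (h i)"
  shows "x \<le> 2 / (real n + 1)"
proof -
  have "(real n + 1) * x = (\<Sum>i\<le>n. x)" by simp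
  also have "\<dots> \<le> (\<Sum>i\<le>n. 2 * pmf M (h i))"
    using assms(2) by (intro sum_mono) auto
  also have "\<dots> = 2 * measure_pmf.prob M (h ` {..n})"
    using assms(1) by (simp add: measure_measure_pmf_finite sum.reindex sum_distrib_left)
  also have "\<dots> \<le> 2" by simp
  finally show ?thesis by (simp add: field_simps add_pos_nonneg)
qed

section \<open>Variance of the binomial distribution\<close>

lemma binomial_weights_sum:
  "(\<Sum>k\<le>n. real (n choose k) * q^k * (1-q)^(n-k)) = 1"
  using binomial_ring[of q "1-q" n] by (simp add: atLeast0AtMost)

lemma binomial_weight_Suc_absorb:
  "real (Suc k) * (real (Suc n choose Suc k) * q^Suc k * r^(Suc n - Suc k)) =
   real (Suc n) * q * (real (n choose k) * q^k * r^(n-k))"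
proof -
  have absorb: "real (Suc k) * real (Suc n choose Suc k) = real (Suc n) * real (n choose k)"
    using Suc_times_binomial_eq[of n k] by (metis mult.commute of_nat_mult)
  have "real (Suc k) * (real (Suc n choose Suc k) * q^Suc k * r^(Suc n - Suc k)) =
        (real (Suc k) * real (Suc n choose Suc k)) * q * (q^k * r^(n-k))"
    by (simp only: power_Suc diff_Suc_Suc mult_ac)
  also have "\<dots> = real (Suc n) * q * (real (n choose k) * q^k * r^(n-k))"
    by (simp only: absorb mult_ac)
  finally show ?thesis .
qed

lemma binomial_weights_first_moment:
  "(\<Sum>k\<le>l. real k * (real (l choose k) * q^k * (1-q)^(l-k))) = real l * q"
proof (cases l)
  case (Suc n)
  have "(\<Sum>k\<le>Suc n. real k * (real (Suc n choose k) * q^k * (1-q)^(Suc n-k)))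
      = (\<Sum>k\<le>n. real (Suc k) * (real (Suc n choose Suc k) * q^Suc k * (1-q)^(Suc n - Suc k)))"
    by (subst sum.atMost_Suc_shift) (simp del: of_nat_Suc diff_Suc_Suc power_Suc)
  also have "\<dots> = (\<Sum>k\<le>n. real (Suc n) * q * (real (n choose k) * q^k * (1-q)^(n-k)))"
    by (simp only: binomial_weight_Suc_absorb)
  also have "\<dots> = real (Suc n) * q"
    by (simp only: sum_distrib_left[symmetric] binomial_weights_sum mult_1_right)
  finally show ?thesis using Suc by simp
qed simp

lemma binomial_weights_factorial_moment:
  "(\<Sum>k\<le>l. real k * (real k - 1) * (real (l choose k) * q^k * (1-q)^(l-k))) =
   real l * (real l - 1) * q^2"
proof (cases l)
  case (Suc n)
  have "(\<Sum>k\<le>Suc n. real k * (real k - 1) * (real (Suc n choose k) * q^k * (1-q)^(Suc n-k)))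
      = (\<Sum>k\<le>n. real k * (real (Suc k) * (real (Suc n choose Suc k) * q^Suc k * (1-q)^(Suc n - Suc k))))"
    by (subst sum.atMost_Suc_shift) (simp del: diff_Suc_Suc power_Suc add: mult_ac)
  also have "\<dots> = (\<Sum>k\<le>n. real (Suc n) * q * (real k * (real (n choose k) * q^k * (1-q)^(n-k))))"
  proof (intro sum.cong refl)
    fix k
    have "real k * (real (Suc k) * (real (Suc n choose Suc k) * q^Suc k * (1-q)^(Suc n - Suc k)))
       = real k * (real (Suc n) * q * (real (n choose k) * q^k * (1-q)^(n-k)))"
      by (simp only: binomial_weight_Suc_absorb)
    then show "real k * (real (Suc k) * (real (Suc n choose Suc k) * q^Suc k * (1-q)^(Suc n - Suc k)))
       = real (Suc n) * q * (real k * (real (n choose k) * q^k * (1-q)^(n-k)))"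
      by (simp only: mult_ac)
  qed
  also have "\<dots> = real (Suc n) * q * (real n * q)"
    by (simp only: sum_distrib_left[symmetric] binomial_weights_first_moment)
  finally show ?thesis using Suc by (simp add: power2_eq_square algebra_simps)
qed simp

lemma binomial_weights_variance:
  "(\<Sum>k\<le>l. (real k - real l * q)^2 * (real (l choose k) * q^k * (1-q)^(l-k))) = real l * q * (1 - q)"
proof -
  define F where "F k = real (l choose k) * q^k * (1-q)^(l-k)" for k
  have expand: "(real k - real l * q)^2 * F k = real k * (real k - 1) * F k
      + (1 - 2 * real l * q) * (real k * F k) + (real l * q)^2 * F k" for k
    by (simp add: power2_eq_square algebra_simps)
  have "(\<Sum>k\<le>l. (real k - real l * q)^2 * F k) =
        (\<Sum>k\<le>l. real k * (real k - 1) * F k) + (1 - 2 * real l * q) * (\<Sum>k\<le>l. real k * F k)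
          + (real l * q)^2 * (\<Sum>k\<le>l. F k)"
    by (simp only: expand sum.distrib sum_distrib_left)
  also have "\<dots> = real l * (real l - 1) * q^2 + (1 - 2 * real l * q) * (real l * q) + (real l * q)^2"
    by (simp only: F_def binomial_weights_first_moment binomial_weights_factorial_moment
        binomial_weights_sum mult_1_right)
  also have "\<dots> = real l * q * (1 - q)"
    by (simp add: power2_eq_square algebra_simps)
  finally show ?thesis by (simp add: F_def)
qed

lemma binomial_pmf_Chebyshev:
  assumes "0 \<le> q" "q \<le> 1" "T > 0" "real l * q * (1-q) > 0"
  shows "measure_pmf.prob (binomial_pmf l q) {k. \<bar>real k - real l * q\<bar> > T * sqrt (real l * q * (1-q))}
          \<le> 1 / T^2"
proof -
  define V where "V = real l * q * (1-q)"
  define F where "F k = real (l choose k) * q^k * (1-q)^(l-k)" for k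
  define far where "far = {k. \<bar>real k - real l * q\<bar> > T * sqrt V}"
  have V: "V > 0" using assms by (simp add: V_def)
  have "measure_pmf.prob (binomial_pmf l q) far = (\<Sum>k\<le>l. F k * indicator far k)"
    using assms by (subst measure_pmf_eq_sum_indicator[of "{..l}"]) (auto simp: F_def set_pmf_binomial_eq)
  also have "\<dots> \<le> (\<Sum>k\<le>l. (real k - real l * q)^2 * F k / (T^2 * V))"
  proof (intro sum_mono)
    fix k
    have F0: "F k \<ge> 0" using assms by (simp add: F_def)
    have "T^2 * V \<le> (real k - real l * q)^2" if "k \<in> far"
    proof -
      have "(T * sqrt V)^2 \<le> \<bar>real k - real l * q\<bar>^2"
        using that assms V by (intro power_mono) (auto simp: far_def)
      then show ?thesis using V by (simp add: power_mult_distrib)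
    qed
    then have "F k * indicator far k \<le> F k * ((real k - real l * q)^2 / (T^2 * V))"
      using F0 assms V by (intro mult_left_mono) (auto simp: indicator_def field_simps)
    then show "F k * indicator far k \<le> (real k - real l * q)^2 * F k / (T^2 * V)"
      by (simp add: field_simps)
  qed
  also have "\<dots> = (\<Sum>k\<le>l. (real k - real l * q)^2 * F k) / (T^2 * V)"
    by (simp add: sum_divide_distrib)
  also have "\<dots> = V / (T^2 * V)"
    by (simp add: F_def V_def binomial_weights_variance)
  also have "\<dots> = 1 / T^2"
    using V by simp
  finally show ?thesis by (simp add: far_def V_def)
qed

section \<open>Shape of the binomial pmf\<close>

lemma pmf_binomial_Suc_ratio:
  assumes "0 \<le> q" "q \<le> 1" "k < l"
  shows "pmf (binomial_pmf l q) (Suc k) * (real (Suc k) * (1-q)) =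
         pmf (binomial_pmf l q) k * (real (l - k) * q)"
proof -
  have absorb: "real (Suc k) * real (l choose Suc k) = real (l - k) * real (l choose k)"
    using binomial_absorption[of k l] binomial_absorb_comp[of l k] by (metis of_nat_mult)
  have l_minus_k: "l - k = Suc (l - Suc k)" using assms(3) by simp
  have "pmf (binomial_pmf l q) (Suc k) * (real (Suc k) * (1-q)) =
        (real (Suc k) * real (l choose Suc k)) * (q^k * q * ((1-q)^(l - Suc k) * (1-q)))"
    using assms by (simp add: mult_ac)
  also have "\<dots> = (real (l - k) * real (l choose k)) * (q^k * q * ((1-q)^(l - Suc k) * (1-q)))"
    by (simp only: absorb)
  also have "\<dots> = pmf (binomial_pmf l q) k * (real (l - k) * q)"
    using assms by (simp add: l_minus_k mult_ac)
  finally show ?thesis .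
qed

lemma pmf_binomial_step_down:
  assumes q: "0 < q" "q < 1" and s: "s = sqrt (real l * q * (1-q))" "s \<ge> 3"
    and j: "real j \<ge> real l * q - s - 1"
  shows "(1 - 3/s) * pmf (binomial_pmf l q) (Suc j) \<le> pmf (binomial_pmf l q) j"
proof (cases "j < l")
  case False
  then have "pmf (binomial_pmf l q) (Suc j) = 0" using q by simp
  then show ?thesis by simp
next
  case True
  define L where "L = real l"
  define J where "J = real j"
  have ss: "s * s = L * q * (1-q)" using s q by (simp add: L_def real_sqrt_mult_self)
  have sp: "s > 0" using s(2) by simp
  have key: "(1 - 3/s) * ((L - J) * q) \<le> (J + 1) * (1 - q)"
  proof (cases "J \<ge> L * q")
    case True
    have "(1 - 3/s) * ((L - J) * q) \<le> (L - J) * q"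
      using \<open>j < l\<close> q s(2) by (intro mult_left_le_one_le) (auto simp: L_def J_def)
    also have "\<dots> \<le> (J + 1) * (1 - q)" using True q by (simp add: algebra_simps)
    finally show ?thesis .
  next
    case False
    have "(L * q - J) * q \<ge> 0" using False q by simp
    hence "(L - J) * q \<ge> s * s" using ss by (simp add: algebra_simps)
    hence "3 * ((L - J) * q) / s \<ge> 3 * s"
      using sp by (simp add: field_simps)
    moreover have "(1 - 3/s) * ((L - J) * q) = (L - J) * q - 3 * ((L - J) * q) / s"
      by (simp add: left_diff_distrib)
    moreover have "J \<ge> L * q - s - 1" using j by (simp add: L_def J_def)
    ultimately show ?thesis using q s(2) by (simp add: algebra_simps)
  qed
  have ratio: "pmf (binomial_pmf l q) (Suc j) * ((J + 1) * (1-q)) = pmf (binomial_pmf l q) j * ((L - J) * q)"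
    using pmf_binomial_Suc_ratio[of q j l] True q by (simp add: J_def L_def add.commute of_nat_diff)
  have "((1 - 3/s) * pmf (binomial_pmf l q) (Suc j)) * ((J + 1) * (1-q))
        = (1 - 3/s) * ((L - J) * q) * pmf (binomial_pmf l q) j"
    using ratio by (simp add: mult_ac)
  also have "\<dots> \<le> pmf (binomial_pmf l q) j * ((J + 1) * (1-q))"
    using key by (subst mult.commute) (intro mult_left_mono, simp_all)
  finally show ?thesis using q by (simp add: J_def mult_le_cancel_right)
qed

lemma pmf_binomial_step_up:
  assumes q: "0 < q" "q < 1" and s: "s = sqrt (real l * q * (1-q))" "s \<ge> 3"
    and j: "real j \<le> real l * q + s"
  shows "(1 - 3/s) * pmf (binomial_pmf l q) j \<le> pmf (binomial_pmf l q) (Suc j)"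
proof -
  define L where "L = real l"
  define J where "J = real j"
  have ss: "s * s = L * q * (1-q)" using s q by (simp add: L_def real_sqrt_mult_self)
  have sp: "s > 0" using s(2) by simp
  have "L * q * (1 - q) \<le> L * (1 - q)"
    using q by (intro mult_right_mono mult_right_le_one_le) (auto simp: L_def)
  moreover have "s < s * s" using s(2) by (simp add: less_le_trans[of 1 3 s])
  ultimately have "J < L" using j ss by (simp add: L_def J_def algebra_simps)
  hence jl: "j < l" by (simp add: L_def J_def)
  have key: "(1 - 3/s) * ((J + 1) * (1 - q)) \<le> (L - J) * q"
  proof (cases "J + 1 \<le> L * q + q")
    case True
    have "(1 - 3/s) * ((J + 1) * (1 - q)) \<le> (J + 1) * (1 - q)"
      using q s(2) by (intro mult_left_le_one_le) (auto simp: J_def)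
    also have "\<dots> \<le> (L - J) * q" using True q by (simp add: algebra_simps)
    finally show ?thesis .
  next
    case False
    have "(J + 1 - L * q) * (1 - q) \<ge> 0" using False q by simp
    hence "(J + 1) * (1 - q) \<ge> s * s" using ss by (simp add: algebra_simps)
    hence "3 * ((J + 1) * (1 - q)) / s \<ge> 3 * s"
      using sp by (simp add: field_simps)
    moreover have "(1 - 3/s) * ((J + 1) * (1 - q)) = (J + 1) * (1 - q) - 3 * ((J + 1) * (1 - q)) / s"
      by (simp add: left_diff_distrib)
    moreover have "J \<le> L * q + s" using j by (simp add: L_def J_def)
    ultimately show ?thesis using q s(2) by (simp add: algebra_simps)
  qed
  have ratio: "pmf (binomial_pmf l q) (Suc j) * ((J + 1) * (1-q)) = pmf (binomial_pmf l q) j * ((L - J) * q)"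
    using pmf_binomial_Suc_ratio[of q j l] jl q by (simp add: J_def L_def add.commute of_nat_diff)
  have "((1 - 3/s) * pmf (binomial_pmf l q) j) * ((J + 1) * (1-q))
        = (1 - 3/s) * ((J + 1) * (1 - q)) * pmf (binomial_pmf l q) j"
    by (simp add: mult_ac)
  also have "\<dots> \<le> ((L - J) * q) * pmf (binomial_pmf l q) j"
    using key by (intro mult_right_mono) simp_all
  also have "\<dots> = pmf (binomial_pmf l q) (Suc j) * ((J + 1) * (1-q))"
    by (simp add: ratio)
  finally show ?thesis using q by (simp add: J_def mult_le_cancel_right)
qed

lemma sqrt_variance_sq_le_mean:
  assumes "0 \<le> q" "q \<le> 1" "s = sqrt (real l * q * (1-q))"
  shows "s * s \<le> real l * q"
  using assms mult_right_le_one_le[of "real l * q" "1 - q"] by (simp add: real_sqrt_mult_self)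

lemma pmf_binomial_decay_left:
  assumes q: "0 < q" "q < 1" and s: "s = sqrt (real l * q * (1-q))" "s \<ge> 6"
    and k: "real l * q \<le> real k" and i: "real i \<le> s / 6"
  shows "(1 - 3/s)^i * pmf (binomial_pmf l q) k \<le> pmf (binomial_pmf l q) (k - i)"
  using i
proof (induction i)
  case (Suc i)
  have "s * s \<ge> 6 * s" using s(2) by (intro mult_right_mono) auto
  then have "real (Suc i) \<le> real k"
    using Suc.prems k s(2) sqrt_variance_sq_le_mean[of q s l] q s(1) by linarith
  then have ki: "k - i = Suc (k - Suc i)" by linarith
  have "(1 - 3/s)^Suc i * pmf (binomial_pmf l q) k \<le> (1 - 3/s) * pmf (binomial_pmf l q) (k - i)"
    using Suc s(2) by (simp add: mult.assoc mult_left_mono)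
  also have "\<dots> \<le> pmf (binomial_pmf l q) (k - Suc i)"
    unfolding ki using Suc.prems k s(2) \<open>real (Suc i) \<le> real k\<close>
    by (intro pmf_binomial_step_down[OF q s(1)]) (auto simp: of_nat_diff)
  finally show ?case .
qed simp

lemma pmf_binomial_decay_right:
  assumes q: "0 < q" "q < 1" and s: "s = sqrt (real l * q * (1-q))" "s \<ge> 6"
    and k: "real k < real l * q" and i: "real i \<le> s / 6"
  shows "(1 - 3/s)^i * pmf (binomial_pmf l q) k \<le> pmf (binomial_pmf l q) (k + i)"
  using i
proof (induction i)
  case (Suc i)
  have "(1 - 3/s)^Suc i * pmf (binomial_pmf l q) k \<le> (1 - 3/s) * pmf (binomial_pmf l q) (k + i)"
    using Suc s(2) by (simp add: mult.assoc mult_left_mono)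
  also have "\<dots> \<le> pmf (binomial_pmf l q) (Suc (k + i))"
    using Suc.prems k s(2) by (intro pmf_binomial_step_up[OF q s(1)]) auto
  finally show ?case by simp
qed simp

text \<open>The pmf decays by at most a factor \<open>1 - 3/s\<close> per step over a stretch of \<open>s/6\<close>
  points on one side of \<open>k\<close>, so \<open>s/6\<close> points each carry at least half the mass of \<open>k\<close>.\<close>
lemma pmf_binomial_le:
  assumes q: "0 < q" "q < 1" and s: "s = sqrt (real l * q * (1-q))" "s \<ge> 6"
  shows "pmf (binomial_pmf l q) k \<le> 12 / s"
proof -
  define n where "n = nat \<lfloor>s/6\<rfloor>"
  have n_le: "real n \<le> s/6" using s(2) of_int_floor_le[of "s/6"] by (simp add: n_def)
  have half: "1/2 \<le> (1 - 3/s)^i" if "i \<le> n" for i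
  proof -
    have "real i * (3/s) \<le> (s/6) * (3/s)"
      using that n_le s(2) by (intro mult_right_mono) auto
    then have "1/2 \<le> 1 + real i * (-3/s)" using s(2) by simp
    also have "\<dots> \<le> (1 + (-3/s))^i"
      by (rule Bernoulli_inequality) (use s(2) in simp)
    finally show ?thesis by simp
  qed
  have geq: "pmf (binomial_pmf l q) k \<le> 2 * ((1 - 3/s)^i * pmf (binomial_pmf l q) k)" if "i \<le> n" for i
  proof -
    have "1/2 * pmf (binomial_pmf l q) k \<le> (1 - 3/s)^i * pmf (binomial_pmf l q) k"
      using half[OF that] by (intro mult_right_mono) auto
    then show ?thesis by simp
  qed
  have "pmf (binomial_pmf l q) k \<le> 2 / (real n + 1)"
  proof (cases "real l * q \<le> real k")
    case True
    have "real n \<le> real k"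
      using True n_le s sqrt_variance_sq_le_mean[of q s l] q
        mult_right_mono[of 6 s s] by linarith
    show ?thesis
    proof (rule pmf_le_of_injective_chain[where M = "binomial_pmf l q"])
      show "inj_on (\<lambda>i. k - i) {..n}" using \<open>real n \<le> real k\<close> by (intro inj_onI) auto
      fix i assume "i \<le> n"
      then show "pmf (binomial_pmf l q) k \<le> 2 * pmf (binomial_pmf l q) (k - i)"
        using geq[of i] pmf_binomial_decay_left[OF q s True, of i] n_le by simp
    qed
  next
    case False
    show ?thesis
    proof (rule pmf_le_of_injective_chain[where M = "binomial_pmf l q"])
      show "inj_on (\<lambda>i. k + i) {..n}" by (intro inj_onI) auto
      fix i assume "i \<le> n"
      then show "pmf (binomial_pmf l q) k \<le> 2 * pmf (binomial_pmf l q) (k + i)"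
        using geq[of i] pmf_binomial_decay_right[OF q s, of k i] False n_le by simp
    qed
  qed
  also have "2 / (real n + 1) \<le> 12 / s"
  proof -
    have "s/6 < real n + 1" using s(2) by (simp add: n_def)
    then show ?thesis using s(2) by (simp add: field_simps)
  qed
  finally show ?thesis .
qed

lemma pmf_binomial_mono_below_mode:
  assumes q: "0 < q" "q < 1" and k: "real k \<le> (real l + 1) * q - 1"
  shows "pmf (binomial_pmf l q) k \<le> pmf (binomial_pmf l q) (Suc k)"
proof -
  have "real l * q \<le> real l" using q by (intro mult_right_le_one_le) auto
  then have kl: "k < l" using k q by (simp add: algebra_simps)
  have "pmf (binomial_pmf l q) k * (real (Suc k) * (1-q)) \<le> pmf (binomial_pmf l q) k * (real (l - k) * q)"
    using kl k by (intro mult_left_mono) (auto simp: of_nat_diff algebra_simps)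
  also have "\<dots> = pmf (binomial_pmf l q) (Suc k) * (real (Suc k) * (1-q))"
    using pmf_binomial_Suc_ratio[of q k l] q kl by simp
  finally show ?thesis using q by (simp add: mult_le_cancel_right)
qed

lemma pmf_binomial_antimono_above_mode:
  assumes q: "0 < q" "q < 1" and k: "real k > (real l + 1) * q - 1"
  shows "pmf (binomial_pmf l q) (Suc k) \<le> pmf (binomial_pmf l q) k"
proof (cases "k < l")
  case False
  then have "pmf (binomial_pmf l q) (Suc k) = 0" using q by simp
  then show ?thesis by simp
next
  case True
  have "pmf (binomial_pmf l q) (Suc k) * (real (Suc k) * (1-q)) = pmf (binomial_pmf l q) k * (real (l - k) * q)"
    using pmf_binomial_Suc_ratio[of q k l] q True by simp
  also have "\<dots> \<le> pmf (binomial_pmf l q) k * (real (Suc k) * (1-q))"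
    using True k by (intro mult_left_mono) (auto simp: of_nat_diff algebra_simps)
  finally show ?thesis using q by (simp add: mult_le_cancel_right)
qed

lemma sum_abs_diff_le_of_unimodal:
  fixes g :: "nat \<Rightarrow> real"
  assumes "\<And>k. g k \<ge> 0" "\<And>k. g k \<le> M" "\<And>k. k < K \<Longrightarrow> g k \<le> g (Suc k)"
    "\<And>k. k \<ge> K \<Longrightarrow> g (Suc k) \<le> g k"
  shows "(\<Sum>k<L. \<bar>g (Suc k) - g k\<bar>) \<le> 2 * M"
proof (cases "L \<le> K")
  case True
  have "(\<Sum>k<L. \<bar>g (Suc k) - g k\<bar>) = (\<Sum>k<L. g (Suc k) - g k)"
    using True assms(3) by (intro sum.cong) auto
  also have "\<dots> = g L - g 0" by (rule sum_lessThan_telescope)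
  finally show ?thesis using assms(1)[of 0] assms(2)[of L] assms(1)[of L] assms(2)[of 0] by linarith
next
  case False
  have "{..<L} = {..<K} \<union> {K..<L}" using False by auto
  then have "(\<Sum>k<L. \<bar>g (Suc k) - g k\<bar>) = (\<Sum>k<K. \<bar>g (Suc k) - g k\<bar>) + (\<Sum>k\<in>{K..<L}. \<bar>g (Suc k) - g k\<bar>)"
    by (simp add: sum.union_disjoint ivl_disj_int(2))
  also have "(\<Sum>k<K. \<bar>g (Suc k) - g k\<bar>) = (\<Sum>k<K. g (Suc k) - g k)"
    using assms(3) by (intro sum.cong) auto
  also have "\<dots> = g K - g 0" by (rule sum_lessThan_telescope)
  also have "(\<Sum>k\<in>{K..<L}. \<bar>g (Suc k) - g k\<bar>) = - (\<Sum>k\<in>{K..<L}. g (Suc k) - g k)"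
    using assms(4) by (simp add: sum_negf[symmetric])
  also have "(\<Sum>k\<in>{K..<L}. g (Suc k) - g k) = g L - g K" using False by (intro sum_Suc_diff') auto
  finally show ?thesis using assms(1)[of 0] assms(2)[of K] assms(1)[of L] by linarith
qed

lemma sum_abs_diff_pmf_binomial_le:
  assumes q: "0 < q" "q < 1" and s: "s = sqrt (real l * q * (1-q))" "s \<ge> 6"
  shows "(\<Sum>k<L. \<bar>pmf (binomial_pmf l q) (Suc k) - pmf (binomial_pmf l q) k\<bar>) \<le> 24 / s"
proof -
  define K where "K = nat (\<lfloor>(real l + 1) * q - 1\<rfloor> + 1)"
  have below_K: "k < K \<longleftrightarrow> real k \<le> (real l + 1) * q - 1" for k
    unfolding K_def by linarith
  have "(\<Sum>k<L. \<bar>pmf (binomial_pmf l q) (Suc k) - pmf (binomial_pmf l q) k\<bar>) \<le> 2 * (12 / s)"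
  proof (rule sum_abs_diff_le_of_unimodal[where K = K])
    fix k
    show "pmf (binomial_pmf l q) k \<le> 12 / s" using pmf_binomial_le[OF q s] .
    show "k < K \<Longrightarrow> pmf (binomial_pmf l q) k \<le> pmf (binomial_pmf l q) (Suc k)"
      using pmf_binomial_mono_below_mode[OF q] below_K by blast
    show "k \<ge> K \<Longrightarrow> pmf (binomial_pmf l q) (Suc k) \<le> pmf (binomial_pmf l q) k"
      using pmf_binomial_antimono_above_mode[OF q] below_K by (meson not_le not_less)
  qed simp
  then show ?thesis by simp
qed

section \<open>Residue classes of a binomial variable\<close>

lemma measure_binomial_pmf_shift_le:
  assumes q: "0 < q" "q < 1" and s: "s = sqrt (real l * q * (1-q))" "s \<ge> 6"
  shows "measure_pmf.prob (binomial_pmf l q) A \<le>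
         measure_pmf.prob (binomial_pmf l q) {k. 1 \<le> k \<and> k - 1 \<in> A} + 24 / s"
proof -
  define f where "f = pmf (binomial_pmf l q)"
  define A' where "A' = {k. 1 \<le> k \<and> k - 1 \<in> A}"
  have supp: "set_pmf (binomial_pmf l q) \<subseteq> {..<Suc l}" "set_pmf (binomial_pmf l q) \<subseteq> {..<Suc (Suc l)}"
    using q by auto
  have prob_A: "measure_pmf.prob (binomial_pmf l q) A = (\<Sum>k<Suc l. f k * indicator A k)"
    by (subst measure_pmf_eq_sum_indicator[OF _ supp(1)]) (simp_all add: f_def)
  have "measure_pmf.prob (binomial_pmf l q) A' = (\<Sum>k<Suc (Suc l). f k * indicator A' k)"
    by (subst measure_pmf_eq_sum_indicator[OF _ supp(2)]) (simp_all add: f_def)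
  also have "\<dots> = (\<Sum>k<Suc l. f (Suc k) * indicator A k)"
    by (subst sum.lessThan_Suc_shift) (simp add: A'_def indicator_def)
  finally have prob_A': "measure_pmf.prob (binomial_pmf l q) A' = (\<Sum>k<Suc l. f (Suc k) * indicator A k)" .
  have "(\<Sum>k<Suc l. f k * indicator A k) - (\<Sum>k<Suc l. f (Suc k) * indicator A k)
        = (\<Sum>k<Suc l. (f k - f (Suc k)) * indicator A k)"
    by (simp only: sum_subtractf[symmetric] left_diff_distrib)
  also have "\<dots> \<le> (\<Sum>k<Suc l. \<bar>f (Suc k) - f k\<bar>)"
    by (intro sum_mono) (auto simp: indicator_def)
  also have "\<dots> \<le> 24 / s" unfolding f_def by (rule sum_abs_diff_pmf_binomial_le[OF q s])
  finally show ?thesis using prob_A prob_A' by (simp add: A'_def)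
qed

lemma disjoint_family_on_residue_classes:
  fixes c :: int
  shows "disjoint_family_on (\<lambda>j. {k::nat. int d dvd int k - (c + int j)}) {..<d}"
proof (unfold disjoint_family_on_def, intro ballI impI)
  fix i j assume ij: "i \<in> {..<d}" "j \<in> {..<d}" "i \<noteq> j"
  show "{k. int d dvd int k - (c + int i)} \<inter> {k. int d dvd int k - (c + int j)} = {}"
  proof (rule ccontr)
    assume "\<not> ?thesis"
    then obtain k where "int d dvd int k - (c + int i)" "int d dvd int k - (c + int j)" by auto
    then have "int d dvd (int k - (c + int j)) - (int k - (c + int i))" by (rule dvd_diff[rotated])
    then have "int i mod int d = int j mod int d" by (simp add: mod_eq_dvd_iff)
    then show False using ij by simp
  qed
qed

text \<open>Shifting the residue class by \<open>j < d\<close> costs at most \<open>24 j / s\<close>, and the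
  \<open>d\<close> shifted classes partition \<open>\<nat>\<close>.\<close>
lemma measure_binomial_pmf_residue_le:
  assumes q: "0 < q" "q < 1" and s: "s = sqrt (real l * q * (1-q))" "s \<ge> 6" and d: "d \<ge> 1"
  shows "measure_pmf.prob (binomial_pmf l q) {k. int d dvd int k - c} \<le> 1 / real d + 24 * real d / s"
proof -
  define P where "P c = measure_pmf.prob (binomial_pmf l q) {k. int d dvd int k - c}" for c
  have step: "P c \<le> P (c + 1) + 24 / s" for c
  proof -
    have "P c \<le> measure_pmf.prob (binomial_pmf l q) {k. 1 \<le> k \<and> k - 1 \<in> {k. int d dvd int k - c}} + 24 / s"
      unfolding P_def by (rule measure_binomial_pmf_shift_le[OF q s])
    also have "measure_pmf.prob (binomial_pmf l q) {k. 1 \<le> k \<and> k - 1 \<in> {k. int d dvd int k - c}} \<le> P (c + 1)"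
      unfolding P_def by (intro measure_pmf.finite_measure_mono) (auto simp: of_nat_diff algebra_simps)
    finally show ?thesis by simp
  qed
  have shifted: "P c \<le> P (c + int j) + 24 * real j / s" for j
  proof (induction j)
    case (Suc j)
    have "P (c + int j) \<le> P (c + int j + 1) + 24 / s" by (rule step)
    then show ?case using Suc by (simp add: add_divide_distrib algebra_simps)
  qed simp
  have "disjoint_family_on (\<lambda>j. {k. int d dvd int k - (c + int j)}) {..<d}"
    by (rule disjoint_family_on_residue_classes)
  then have "(\<Sum>j<d. P (c + int j)) = measure_pmf.prob (binomial_pmf l q) (\<Union>j<d. {k. int d dvd int k - (c + int j)})"
    unfolding P_def by (intro measure_pmf.finite_measure_finite_Union[symmetric]) auto
  also have "\<dots> \<le> 1" by simp
  finally have total: "(\<Sum>j<d. P (c + int j)) \<le> 1" .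
  have "real d * P c = (\<Sum>j<d. P c)" by simp
  also have "\<dots> \<le> (\<Sum>j<d. P (c + int j) + 24 * real d / s)"
  proof (intro sum_mono)
    fix j assume "j \<in> {..<d}"
    then have "24 * real j / s \<le> 24 * real d / s" using s(2) by (intro divide_right_mono) auto
    then show "P c \<le> P (c + int j) + 24 * real d / s" using shifted[of j] by linarith
  qed
  also have "\<dots> \<le> 1 + real d * (24 * real d / s)" using total by (simp add: sum.distrib)
  finally show ?thesis using d by (simp add: P_def field_simps)
qed

lemma card_residue_window:
  fixes mu R :: real and c :: int
  assumes d: "d \<ge> 1" and R: "R \<ge> 0"
  defines "G \<equiv> {k::nat. \<bar>real k - mu\<bar> \<le> R \<and> int d dvd int k - c}"
  shows "finite G" "real (card G) \<le> 2 * R / real d + 1"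
proof -
  define lo where "lo = (mu - R - real_of_int c) / real d"
  define hi where "hi = (mu + R - real_of_int c) / real d"
  define quot where "quot k = (int k - c) div int d" for k
  have d_pos: "real d > 0" using d by simp
  have "G \<subseteq> {..nat \<lceil>mu + R\<rceil>}"
    by (auto simp: G_def abs_le_iff intro!: le_nat_iff[THEN iffD2] le_ceiling_iff[THEN iffD2])
  then show fin: "finite G" by (rule finite_subset) simp
  have quot_eq: "int k - c = int d * quot k" if "k \<in> G" for k
    using that by (simp add: G_def quot_def dvd_mult_div_cancel)
  have "inj_on quot G"
    by (intro inj_onI) (metis quot_eq add_diff_cancel_right' diff_add_cancel of_nat_eq_iff)
  have "quot ` G \<subseteq> {\<lceil>lo\<rceil>..\<lfloor>hi\<rfloor>}"
  proof
    fix t assume "t \<in> quot ` G"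
    then obtain k where k: "k \<in> G" "t = quot k" by auto
    then have "real k - real_of_int c = real d * real_of_int t"
      using quot_eq[OF k(1)] by (metis of_int_mult of_int_of_nat_eq of_int_diff)
    moreover have "\<bar>real k - mu\<bar> \<le> R" using k by (auto simp: G_def)
    ultimately have "lo \<le> real_of_int t" "real_of_int t \<le> hi"
      using d_pos by (auto simp: lo_def hi_def field_simps abs_le_iff)
    then show "t \<in> {\<lceil>lo\<rceil>..\<lfloor>hi\<rfloor>}" by (simp add: ceiling_le_iff le_floor_iff)
  qed
  then have "card G \<le> card {\<lceil>lo\<rceil>..\<lfloor>hi\<rfloor>}"
    using \<open>inj_on quot G\<close> by (metis card_image card_mono finite_atLeastAtMost_int)
  then have "real (card G) \<le> max 0 (hi - lo + 1)"
    using of_int_floor_le[of hi] le_of_int_ceiling[of lo] by (simp add: max_def) linarith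
  also have "\<dots> = 2 * R / real d + 1"
    using d_pos R by (simp add: hi_def lo_def field_simps)
  finally show "real (card G) \<le> 2 * R / real d + 1" .
qed

lemma sum_inverse_squares_le:
  assumes "a \<ge> 1"
  shows "(\<Sum>d\<in>{Suc a..b}. 1 / (real d)^2) \<le> 1 / real a"
proof (cases "b \<ge> a")
  case True
  have "(\<Sum>d\<in>{Suc a..b}. 1 / (real d)^2) \<le> 1 / real a - 1 / real b"
    using True
  proof (induction b rule: nat_induct_at_least)
    case (Suc n)
    have n: "real n \<ge> 1" using Suc.hyps assms by simp
    have "1 / (real (Suc n))^2 \<le> 1 / (real n * real (Suc n))"
      using n by (intro divide_left_mono) (auto simp: power2_eq_square)
    also have "\<dots> = 1 / real n - 1 / real (Suc n)"
      using n by (simp add: field_simps)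
    finally show ?case using Suc.IH Suc.hyps by (simp add: atLeastAtMostSuc_conv)
  qed simp
  moreover have "0 \<le> 1 / real b" by simp
  ultimately show ?thesis by linarith
qed simp

lemma measure_binomial_pmf_residue_sq_le:
  assumes q: "0 < q" "q < 1" and s: "s = sqrt (real l * q * (1-q))" "s \<ge> 6"
    and d: "d \<ge> 1" "24 * real d \<le> s" and G: "G \<subseteq> {k. int d dvd int k - c}"
  shows "measure_pmf.prob (binomial_pmf l q) G ^ 2 \<le> 1 / (real d)^2 + 72 * real d / s"
proof -
  define e where "e = 24 * real d / s"
  have e: "0 \<le> e" "e \<le> 1" using s(2) d(2) by (auto simp: e_def)
  have "measure_pmf.prob (binomial_pmf l q) G \<le> measure_pmf.prob (binomial_pmf l q) {k. int d dvd int k - c}"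
    using G by (intro measure_pmf.finite_measure_mono) auto
  also have "\<dots> \<le> 1 / real d + e"
    unfolding e_def using d by (intro measure_binomial_pmf_residue_le[OF q s]) auto
  finally have "measure_pmf.prob (binomial_pmf l q) G ^ 2 \<le> (1 / real d + e)^2"
    by (intro power_mono) auto
  also have "\<dots> = 1 / (real d)^2 + e * (2 / real d + e)"
    by (simp add: power2_eq_square algebra_simps)
  also have "\<dots> \<le> 1 / (real d)^2 + e * 3"
  proof -
    have "2 / real d \<le> 2" using d by (simp add: field_simps)
    then show ?thesis using e by (intro add_left_mono mult_left_mono) auto
  qed
  finally show ?thesis by (simp add: e_def)
qed

lemma measure_binomial_pmf_residue_window_sq_le:
  assumes q: "0 < q" "q < 1" and s: "s = sqrt (real l * q * (1-q))" "s \<ge> 6" and d: "d \<ge> 1"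
  shows "measure_pmf.prob (binomial_pmf l q) {k. \<bar>real k - mu\<bar> \<le> 4 * s \<and> int d dvd int k - c} ^ 2
         \<le> 18432 / (real d)^2 + 288 / s^2"
proof -
  define G where "G = {k::nat. \<bar>real k - mu\<bar> \<le> 4 * s \<and> int d dvd int k - c}"
  have fin: "finite G" and card: "real (card G) \<le> 2 * (4 * s) / real d + 1"
    using card_residue_window[OF d, of "4 * s" mu c] s(2) by (simp_all add: G_def)
  have "measure_pmf.prob (binomial_pmf l q) G = sum (pmf (binomial_pmf l q)) G"
    using fin by (simp add: measure_measure_pmf_finite)
  also have "\<dots> \<le> real (card G) * (12 / s)"
    using sum_mono[of G _ "\<lambda>_. 12 / s", OF pmf_binomial_le[OF q s]] by simp
  also have "\<dots> \<le> (2 * (4 * s) / real d + 1) * (12 / s)"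
    using card s(2) by (intro mult_right_mono) auto
  also have "\<dots> = 96 / real d + 12 / s"
    using s(2) d by (simp add: field_simps)
  finally have "measure_pmf.prob (binomial_pmf l q) G ^ 2 \<le> (96 / real d + 12 / s)^2"
    by (intro power_mono) auto
  also have "\<dots> \<le> 2 * (96 / real d)^2 + 2 * (12 / s)^2"
    using sum_squares_bound[of "96 / real d" "12 / s"] by (simp add: power2_eq_square algebra_simps)
  also have "\<dots> = 18432 / (real d)^2 + 288 / s^2"
    by (simp add: power_divide)
  finally show ?thesis by (simp add: G_def)
qed

section \<open>Coprimality of two binomial draws\<close>

lemma sum_measure_binomial_residue_sq_small_le:
  assumes q: "0 < q" "q < 1" and s: "s = sqrt (real l * q * (1-q))" "s \<ge> 6" and P: "24 * real P \<le> s"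
  shows "(\<Sum>d\<in>{2..P}. measure_pmf.prob (binomial_pmf l q) {k. \<bar>real k - mu\<bar> \<le> 4 * s \<and> int d dvd int k - c} ^ 2)
         \<le> 3/4 + 72 * real P * real P / s"
proof -
  have "(\<Sum>d\<in>{2..P}. measure_pmf.prob (binomial_pmf l q) {k. \<bar>real k - mu\<bar> \<le> 4 * s \<and> int d dvd int k - c} ^ 2)
      \<le> (\<Sum>d\<in>{2..P}. 1 / (real d)^2 + 72 * real P / s)"
  proof (intro sum_mono)
    fix d assume d: "d \<in> {2..P}"
    then have "24 * real d \<le> s" using P by simp
    then have "measure_pmf.prob (binomial_pmf l q) {k. \<bar>real k - mu\<bar> \<le> 4 * s \<and> int d dvd int k - c} ^ 2
        \<le> 1 / (real d)^2 + 72 * real d / s"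
      using d by (intro measure_binomial_pmf_residue_sq_le[OF q s]) auto
    also have "\<dots> \<le> 1 / (real d)^2 + 72 * real P / s"
      using d s(2) by (simp add: divide_right_mono)
    finally show "measure_pmf.prob (binomial_pmf l q) {k. \<bar>real k - mu\<bar> \<le> 4 * s \<and> int d dvd int k - c} ^ 2
        \<le> 1 / (real d)^2 + 72 * real P / s" .
  qed
  also have "\<dots> \<le> 3/4 + 72 * real P * real P / s"
  proof -
    have "(\<Sum>d\<in>{2..P}. 1 / (real d)^2) \<le> (\<Sum>d\<in>insert 2 {Suc 2..P}. 1 / (real d)^2)"
      by (intro sum_mono2) auto
    also have "\<dots> \<le> 1/4 + 1/2"
      using sum_inverse_squares_le[of 2 P] by simp
    finally have "(\<Sum>d\<in>{2..P}. 1 / (real d)^2) \<le> 3/4" by simp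
    moreover have "real (card {2..P}) * (72 * real P / s) \<le> real P * (72 * real P / s)"
      using s(2) by (intro mult_right_mono) auto
    ultimately show ?thesis by (simp add: sum.distrib)
  qed
  finally show ?thesis .
qed

lemma sum_measure_binomial_residue_window_sq_large_le:
  assumes q: "0 < q" "q < 1" and s: "s = sqrt (real l * q * (1-q))" "s \<ge> 6"
    and P: "P \<ge> 1" and D: "real D \<le> 8 * s"
  shows "(\<Sum>d\<in>{Suc P..D}. measure_pmf.prob (binomial_pmf l q) {k. \<bar>real k - mu\<bar> \<le> 4 * s \<and> int d dvd int k - c} ^ 2)
         \<le> 18432 / real P + 2304 / s"
proof -
  have "(\<Sum>d\<in>{Suc P..D}. measure_pmf.prob (binomial_pmf l q) {k. \<bar>real k - mu\<bar> \<le> 4 * s \<and> int d dvd int k - c} ^ 2)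
      \<le> (\<Sum>d\<in>{Suc P..D}. 18432 / (real d)^2 + 288 / s^2)"
    by (intro sum_mono measure_binomial_pmf_residue_window_sq_le[OF q s]) auto
  also have "\<dots> \<le> 18432 / real P + 2304 / s"
  proof -
    have "(\<Sum>d\<in>{Suc P..D}. 18432 / (real d)^2) = 18432 * (\<Sum>d\<in>{Suc P..D}. 1 / (real d)^2)"
      by (simp add: sum_distrib_left)
    also have "\<dots> \<le> 18432 * (1 / real P)"
      using P by (intro mult_left_mono sum_inverse_squares_le) simp_all
    finally have "(\<Sum>d\<in>{Suc P..D}. 18432 / (real d)^2) \<le> 18432 / real P" by simp
    moreover have "real (card {Suc P..D}) * (288 / s^2) \<le> 8 * s * (288 / s^2)"
      using D by (intro mult_right_mono) auto
    moreover have "8 * s * (288 / s^2) = 2304 / s" using s(2) by (simp add: power2_eq_square)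
    ultimately show ?thesis by (simp add: sum.distrib)
  qed
  finally show ?thesis .
qed

text \<open>Small moduli \<open>d \<le> 2^20\<close> use the residue bound, larger ones the size of the window.\<close>
lemma sum_measure_binomial_residue_window_sq_le:
  assumes q: "0 < q" "q < 1" and s: "s = sqrt (real l * q * (1-q))" "s \<ge> 2^60"
  shows "(\<Sum>d\<in>{2..nat \<lfloor>8 * s\<rfloor>}.
           measure_pmf.prob (binomial_pmf l q) {k. \<bar>real k - mu\<bar> \<le> 4 * s \<and> int d dvd int k - c} ^ 2)
         \<le> 25/32"
proof -
  define D where "D = nat \<lfloor>8 * s\<rfloor>"
  define P :: nat where "P = 2^20"
  define h where "h d = measure_pmf.prob (binomial_pmf l q) {k. \<bar>real k - mu\<bar> \<le> 4 * s \<and> int d dvd int k - c} ^ 2" for d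
  have s6: "s \<ge> 6" using s(2) by simp
  have "(\<Sum>d\<in>{2..D}. h d) \<le> (\<Sum>d\<in>{2..P} \<union> {Suc P..D}. h d)"
    by (intro sum_mono2) (auto simp: h_def)
  also have "\<dots> = (\<Sum>d\<in>{2..P}. h d) + (\<Sum>d\<in>{Suc P..D}. h d)"
    by (rule sum.union_disjoint) auto
  also have "\<dots> \<le> (3/4 + 72 * real P * real P / s) + (18432 / real P + 2304 / s)"
    unfolding h_def using s6 s(2)
    by (intro add_mono sum_measure_binomial_residue_sq_small_le[OF q s(1) s6]
        sum_measure_binomial_residue_window_sq_large_le[OF q s(1) s6]) (auto simp: P_def D_def)
  also have "\<dots> = 3/4 + 18432 / real P + (72 * real P * real P + 2304) / s"
    by (simp add: add_divide_distrib)
  also have "\<dots> \<le> 3/4 + 18432 / real P + (72 * real P * real P + 2304) / 2^60"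
    using s(2) by (intro add_left_mono divide_left_mono) auto
  also have "\<dots> \<le> 25/32" by (simp add: P_def)
  finally show ?thesis by (simp add: h_def D_def)
qed

lemma not_coprime_imp_common_divisor:
  fixes k k' :: nat and c :: int
  assumes "gcd (int k - c) (int k' - c) \<noteq> 1" "k \<noteq> k'"
    and "\<bar>real k - mu\<bar> \<le> R" "\<bar>real k' - mu\<bar> \<le> R"
  shows "\<exists>d\<in>{2..nat \<lfloor>2 * R\<rfloor>}. int d dvd int k - c \<and> int d dvd int k' - c"
proof -
  define g where "g = gcd (int k - c) (int k' - c)"
  have "g \<noteq> 0" using assms(2) by (auto simp: g_def)
  then have g2: "g \<ge> 2" using assms(1) g_def by (smt (verit) gcd_ge_0_int)
  have "g dvd (int k - c) - (int k' - c)" unfolding g_def by (rule dvd_diff) (rule gcd_dvd1, rule gcd_dvd2)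
  then have "g \<le> \<bar>int k - int k'\<bar>" using assms(2) by (intro zdvd_imp_le) auto
  also have "real_of_int \<bar>int k - int k'\<bar> \<le> 2 * R" using assms(3,4) by simp
  finally have "g \<le> \<lfloor>2 * R\<rfloor>" by (simp add: le_floor_iff)
  then have "nat g \<in> {2..nat \<lfloor>2 * R\<rfloor>}" using g2 by auto
  moreover have "int (nat g) dvd int k - c" "int (nat g) dvd int k' - c"
    using g2 by (simp_all add: g_def)
  ultimately show ?thesis by blast
qed

lemma not_coprime_pairs_subset:
  fixes c :: int and mu R :: real
  defines "W \<equiv> {k::nat. \<bar>real k - mu\<bar> \<le> R}"
  shows "{p. gcd (int (fst p) - c) (int (snd p) - c) \<noteq> 1} \<subseteq>
           ((- W) \<times> UNIV \<union> UNIV \<times> (- W)) \<union> {p. fst p = snd p} \<union>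
           (\<Union>d\<in>{2..nat \<lfloor>2 * R\<rfloor>}. {k. \<bar>real k - mu\<bar> \<le> R \<and> int d dvd int k - c}
                                    \<times> {k. \<bar>real k - mu\<bar> \<le> R \<and> int d dvd int k - c})"
proof
  fix p assume "p \<in> {p. gcd (int (fst p) - c) (int (snd p) - c) \<noteq> 1}"
  then obtain k k' where p: "p = (k, k')" and "gcd (int k - c) (int k' - c) \<noteq> 1"
    by (cases p) auto
  then show "p \<in> ((- W) \<times> UNIV \<union> UNIV \<times> (- W)) \<union> {p. fst p = snd p} \<union>
      (\<Union>d\<in>{2..nat \<lfloor>2 * R\<rfloor>}. {k. \<bar>real k - mu\<bar> \<le> R \<and> int d dvd int k - c}
                               \<times> {k. \<bar>real k - mu\<bar> \<le> R \<and> int d dvd int k - c})"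
    using not_coprime_imp_common_divisor[of k c k' mu R]
    by (cases "k \<in> W \<and> k' \<in> W \<and> k \<noteq> k'") (auto simp: W_def)
qed

lemma measure_binomial_pair_not_coprime_le:
  fixes c :: int
  assumes q: "0 \<le> q" "q \<le> 1" and V: "real l * q * (1-q) \<ge> 2^120"
  shows "measure_pmf.prob (pair_pmf (binomial_pmf l q) (binomial_pmf l q))
           {p. gcd (int (fst p) - c) (int (snd p) - c) \<noteq> 1} \<le> 15/16"
proof -
  define B where "B = binomial_pmf l q"
  define s where "s = sqrt (real l * q * (1-q))"
  define W where "W = {k::nat. \<bar>real k - real l * q\<bar> \<le> 4 * s}"
  define G where "G d = {k::nat. \<bar>real k - real l * q\<bar> \<le> 4 * s \<and> int d dvd int k - c}" for d :: nat
  define D where "D = nat \<lfloor>2 * (4 * s)\<rfloor>"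
  have qs: "0 < q" "q < 1" using q V by (auto simp: order.order_iff_strict)
  have s60: "s \<ge> 2^60" unfolding s_def by (rule real_le_rsqrt) (use V in simp)
  then have s6: "s \<ge> 6" by simp
  define P where "P = measure_pmf.prob (pair_pmf B B)"
  have cover: "{p. gcd (int (fst p) - c) (int (snd p) - c) \<noteq> 1} \<subseteq>
      ((- W) \<times> UNIV \<union> UNIV \<times> (- W)) \<union> {p. fst p = snd p} \<union> (\<Union>d\<in>{2..D}. G d \<times> G d)"
    unfolding W_def G_def D_def by (rule not_coprime_pairs_subset)
  have union: "P (\<Union>d\<in>{2..D}. G d \<times> G d) \<le> (\<Sum>d\<in>{2..D}. P (G d \<times> G d))"
    unfolding P_def by (rule measure_pmf.finite_measure_subadditive_finite) auto
  have "P {p. gcd (int (fst p) - c) (int (snd p) - c) \<noteq> 1}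
       \<le> P (((- W) \<times> UNIV \<union> UNIV \<times> (- W)) \<union> {p. fst p = snd p} \<union> (\<Union>d\<in>{2..D}. G d \<times> G d))"
    unfolding P_def using cover by (intro measure_pmf.finite_measure_mono) auto
  also have "\<dots> \<le> P ((- W) \<times> UNIV) + P (UNIV \<times> (- W)) + P {p. fst p = snd p} + P (\<Union>d\<in>{2..D}. G d \<times> G d)"
    unfolding P_def
    using measure_Un_le[of "(- W) \<times> UNIV" "measure_pmf (pair_pmf B B)" "UNIV \<times> (- W)"]
      measure_Un_le[of "(- W) \<times> UNIV \<union> UNIV \<times> (- W)" "measure_pmf (pair_pmf B B)" "{p. fst p = snd p}"]
      measure_Un_le[of "(- W) \<times> UNIV \<union> UNIV \<times> (- W) \<union> {p. fst p = snd p}" "measure_pmf (pair_pmf B B)"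
        "\<Union>d\<in>{2..D}. G d \<times> G d"]
    by simp
  also have "\<dots> \<le> 1/16 + 1/16 + 12 / s + 25/32"
  proof -
    have tail: "measure_pmf.prob B (- W) \<le> 1/16"
      using binomial_pmf_Chebyshev[OF q, of 4 l] V
      by (simp add: B_def W_def s_def Compl_eq not_le)
    have "P {p. fst p = snd p} \<le> 12 / s"
      using pmf_binomial_le[OF qs s_def s6] qs
      unfolding P_def by (intro measure_pair_pmf_diagonal_le) (auto simp: B_def)
    moreover have "(\<Sum>d\<in>{2..D}. P (G d \<times> G d)) \<le> 25/32"
      using sum_measure_binomial_residue_window_sq_le[OF qs s_def s60, of "real l * q" c]
      by (simp add: P_def measure_pair_pmf_Times power2_eq_square B_def G_def D_def)
    moreover have "P ((- W) \<times> UNIV) \<le> 1/16" "P (UNIV \<times> (- W)) \<le> 1/16"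
      using tail by (simp_all add: P_def measure_pair_pmf_Times)
    ultimately show ?thesis using union by linarith
  qed
  also have "\<dots> \<le> 15/16"
    using s60 by (simp add: field_simps)
  finally show ?thesis by (simp add: P_def B_def)
qed

lemma gcd_mult_left_eq_self_iff:
  fixes a x y :: int
  assumes "a > 0"
  shows "gcd (a * x) (a * y) = a \<longleftrightarrow> gcd x y = 1"
  using assms by (simp add: gcd_mult_left abs_mult)

lemma measure_pair_scaled_gcd_ne_le:
  fixes S :: "nat pmf" and a b :: int
  assumes S: "finite (set_pmf S)" and a: "a > 0"
    and q: "0 \<le> q" "q \<le> 1" and V: "real l * q * (1-q) \<ge> 2^120"
  defines "Q \<equiv> map_pmf (\<lambda>s. a * (int s - b)) S"
  shows "measure_pmf.prob (pair_pmf Q Q) {p. gcd (fst p) (snd p) \<noteq> a}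
           \<le> 15/16 + 2 * tv_dist S (map_pmf (\<lambda>k. u + k) (binomial_pmf l q))"
proof -
  define Y where "Y = map_pmf (\<lambda>k. u + k) (binomial_pmf l q)"
  define bad where "bad = {p. gcd (a * (int (fst p) - b)) (a * (int (snd p) - b)) \<noteq> a}"
  have "measure_pmf.prob (pair_pmf Q Q) {p. gcd (fst p) (snd p) \<noteq> a} = measure_pmf.prob (pair_pmf S S) bad"
    by (simp add: Q_def bad_def map_pair[symmetric] case_prod_unfold vimage_def)
  also have "\<dots> \<le> measure_pmf.prob (pair_pmf Y Y) bad + 2 * tv_dist S Y"
    using S q by (intro measure_pair_pmf_le_tv_dist[of "set_pmf S \<union> set_pmf Y"]) (auto simp: Y_def set_pmf_binomial_eq)
  also have "measure_pmf.prob (pair_pmf Y Y) bad =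
      measure_pmf.prob (pair_pmf (binomial_pmf l q) (binomial_pmf l q))
        {p. gcd (int (fst p) - (b - int u)) (int (snd p) - (b - int u)) \<noteq> 1}"
  proof -
    have shift: "int (u + k) - b = int k - (b - int u)" for k
      by simp
    show ?thesis
      by (simp add: Y_def bad_def map_pair[symmetric] case_prod_unfold vimage_def
          shift gcd_mult_left_eq_self_iff[OF a] del: of_nat_add)
  qed
  also have "\<dots> \<le> 15/16"
    by (rule measure_binomial_pair_not_coprime_le[OF q V])
  finally show ?thesis by (simp add: Y_def)
qed

section \<open>Independent samples\<close>

lemma measure_Pi_pmf_pairs:
  fixes Q :: "'b pmf" and bad :: "('b \<times> 'b) set"
  assumes sym: "\<And>x y. (x, y) \<in> bad \<longleftrightarrow> (y, x) \<in> bad"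
  shows "measure_pmf.prob (Pi_pmf {..<2*n} dflt (\<lambda>_. Q)) {v. \<forall>j<n. (v (2*j), v (2*j+1)) \<in> bad}
         = measure_pmf.prob (pair_pmf Q Q) bad ^ n"
proof (induction n)
  case (Suc n)
  define R where "R = Pi_pmf {..<2*n} dflt (\<lambda>_. Q)"
  define H where "H = (\<lambda>((x, y), f). (f(2*n := y))(2*n+1 := (x::'b)))"
  have "{..<2 * Suc n} = insert (2*n+1) (insert (2*n) {..<2*n})" by auto
  then have "Pi_pmf {..<2 * Suc n} dflt (\<lambda>_. Q) =
      map_pmf (\<lambda>(y, f). f(2*n+1 := y)) (pair_pmf Q (map_pmf (\<lambda>(y, f). f(2*n := y)) (pair_pmf Q R)))"
    by (simp add: R_def Pi_pmf_insert)
  also have "\<dots> = map_pmf H (pair_pmf (pair_pmf Q Q) R)"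
    by (simp add: pair_map_pmf2 pair_pair_pmf pmf.map_comp o_def case_prod_unfold H_def)
  finally have split: "Pi_pmf {..<2 * Suc n} dflt (\<lambda>_. Q) = map_pmf H (pair_pmf (pair_pmf Q Q) R)" .
  have "H -` {v. \<forall>j<Suc n. (v (2*j), v (2*j+1)) \<in> bad} = bad \<times> {v. \<forall>j<n. (v (2*j), v (2*j+1)) \<in> bad}"
    by (auto simp: H_def less_Suc_eq sym)
  then show ?case
    using Suc.IH unfolding split by (simp add: measure_pair_pmf_Times R_def)
qed simp

lemma Gcd_image_eq_of_gcd_pair:
  fixes v :: "nat \<Rightarrow> int" and a :: int
  assumes "a > 0" "\<And>i. i < m \<Longrightarrow> a dvd v i" "i < m" "i' < m" "gcd (v i) (v i') = a"
  shows "Gcd (v ` {..<m}) = a"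
proof (rule zdvd_antisym_nonneg)
  have "Gcd (v ` {..<m}) dvd gcd (v i) (v i')"
    using assms(3,4) by (simp add: Gcd_dvd)
  then show "Gcd (v ` {..<m}) dvd a" using assms(5) by simp
  show "a dvd Gcd (v ` {..<m})" using assms(2) by (intro Gcd_greatest) auto
qed (use assms(1) in auto)

lemma measure_Pi_pmf_Gcd_eq_ge:
  fixes Q :: "int pmf" and a :: int
  assumes a: "a > 0" and dvd: "\<And>x. x \<in> set_pmf Q \<Longrightarrow> a dvd x"
  shows "measure_pmf.prob (Pi_pmf {..<m} 0 (\<lambda>_. Q)) {v. Gcd (v ` {..<m}) = a}
           \<ge> 1 - measure_pmf.prob (pair_pmf Q Q) {p. gcd (fst p) (snd p) \<noteq> a} ^ (m div 2)"
proof -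
  define n where "n = m div 2"
  define PI where "PI = Pi_pmf {..<m} 0 (\<lambda>_. Q)"
  define bad_pairs where "bad_pairs = {v :: nat \<Rightarrow> int. \<forall>j<n. gcd (v (2*j)) (v (2*j+1)) \<noteq> a}"
  have "{v. Gcd (v ` {..<m}) \<noteq> a} \<inter> set_pmf PI \<subseteq> bad_pairs"
  proof (clarify)
    fix v assume v: "Gcd (v ` {..<m}) \<noteq> a" "v \<in> set_pmf PI"
    then have "a dvd v i" if "i < m" for i
      using that dvd by (auto simp: PI_def set_Pi_pmf PiE_dflt_def)
    then show "v \<in> bad_pairs"
      using v(1) Gcd_image_eq_of_gcd_pair[OF a, of m v] by (fastforce simp: bad_pairs_def n_def)
  qed
  then have "measure_pmf.prob PI {v. Gcd (v ` {..<m}) \<noteq> a} \<le> measure_pmf.prob PI bad_pairs"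
    by (subst measure_Int_set_pmf[symmetric]) (intro measure_pmf.finite_measure_mono, auto)
  also have "\<dots> = measure_pmf.prob (Pi_pmf {..<2*n} 0 (\<lambda>_. Q)) bad_pairs"
  proof -
    have "Pi_pmf {..<2*n} 0 (\<lambda>_. Q) = map_pmf (\<lambda>f x. if x \<in> {..<2*n} then f x else 0) PI"
      unfolding PI_def by (rule Pi_pmf_subset) (auto simp: n_def)
    moreover have "(\<lambda>f x. if x \<in> {..<2*n} then f x else 0) -` bad_pairs = bad_pairs"
      by (auto simp: bad_pairs_def)
    ultimately show ?thesis by simp
  qed
  also have "\<dots> = measure_pmf.prob (pair_pmf Q Q) {p. gcd (fst p) (snd p) \<noteq> a} ^ n"
    unfolding bad_pairs_def using measure_Pi_pmf_pairs[of "{p. gcd (fst p) (snd p) \<noteq> a}" n 0 Q]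
    by (simp add: gcd.commute)
  finally have "measure_pmf.prob PI {v. Gcd (v ` {..<m}) \<noteq> a}
      \<le> measure_pmf.prob (pair_pmf Q Q) {p. gcd (fst p) (snd p) \<noteq> a} ^ (m div 2)"
    by (simp add: n_def)
  moreover have "{v. Gcd (v ` {..<m}) = a} = UNIV - {v. Gcd (v ` {..<m}) \<noteq> a}" by auto
  ultimately show ?thesis
    using measure_pmf.prob_compl[of "{v. Gcd (v ` {..<m}) \<noteq> a}" PI] by (simp add: PI_def)
qed

lemma power_half_samples_le_sqrt:
  fixes eps beta :: real
  assumes eps: "0 < eps" "eps \<le> 1/64" and beta: "0 \<le> beta" "beta \<le> 31/32"
    and m: "real m \<ge> 4 / sqrt eps"
  shows "beta ^ (m div 2) \<le> 32 * sqrt eps"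
proof -
  define n where "n = m div 2"
  have "sqrt eps \<le> sqrt (1/64)" using eps by (intro real_sqrt_le_mono)
  then have se: "0 < sqrt eps" "sqrt eps \<le> 1/8" using eps by (simp_all add: real_sqrt_divide)
  then have "2 / sqrt eps \<ge> 16" by (simp add: field_simps)
  moreover have "real m \<le> 2 * real n + 1" by (simp add: n_def)
  ultimately have n: "real n \<ge> 1 / sqrt eps" using m by (simp add: field_simps)
  then have "real n > 0" using se by (smt (verit) divide_pos_pos)
  have "beta ^ n \<le> (1 - 1/32) ^ n" using beta by (intro power_mono) auto
  also have "\<dots> \<le> exp (- (1/32)) ^ n"
    using exp_ge_add_one_self[of "-(1/32) :: real"] by (intro power_mono) auto
  also have "\<dots> = 1 / exp (real n / 32)"
    by (simp add: exp_of_nat_mult[symmetric] exp_minus field_simps)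
  also have "\<dots> \<le> 1 / (real n / 32)"
  proof (rule divide_left_mono)
    show "real n / 32 \<le> exp (real n / 32)"
      using exp_ge_add_one_self[of "real n / 32"] by linarith
  qed (use \<open>real n > 0\<close> in auto)
  also have "\<dots> \<le> 32 * sqrt eps"
    using n se \<open>real n > 0\<close> by (simp add: field_simps)
  finally show ?thesis by (simp add: n_def)
qed

lemma set_pmf_pbd: "set_pmf (pbd ps) \<subseteq> {..length ps}"
  by (induction ps) (fastforce simp: set_bind_pmf)+

lemma measure_Pi_pmf_pbd_Gcd_eq_ge:
  fixes a b :: int
  assumes c0: "c0 > 0" and eps: "0 < eps" "eps \<le> 1/64" "eps \<le> sqrt c0 / 2^60"
    and heavy: "heavy_binomial_form c0 eps (length ps) (pbd ps)"
    and a: "a > 0" and m: "real m \<ge> 4 / sqrt eps"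
  shows "measure_pmf.prob (Pi_pmf {..<m} 0 (\<lambda>_. map_pmf (\<lambda>s. a * (int s - b)) (pbd ps)))
           {v. Gcd (v ` {..<m}) = a} \<ge> 1 - 32 * sqrt eps"
proof -
  obtain u l q where q: "0 \<le> q" "q \<le> 1"
    and tv: "tv_dist (pbd ps) (map_pmf (\<lambda>k. u + k) (binomial_pmf l q)) \<le> eps"
    and var: "real l * q * (1 - q) \<ge> c0 / eps^2"
    using heavy unfolding heavy_binomial_form_def by blast
  have "(eps * 2^60)^2 \<le> sqrt c0 ^ 2"
    using eps by (intro power_mono) (auto simp: field_simps)
  then have "2^120 \<le> c0 / eps^2"
    using eps c0 by (simp add: field_simps power_mult_distrib)
  then have V: "real l * q * (1 - q) \<ge> 2^120" using var by linarith
  define Q where "Q = map_pmf (\<lambda>s. a * (int s - b)) (pbd ps)"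
  define beta where "beta = measure_pmf.prob (pair_pmf Q Q) {p. gcd (fst p) (snd p) \<noteq> a}"
  have "beta \<le> 15/16 + 2 * tv_dist (pbd ps) (map_pmf (\<lambda>k. u + k) (binomial_pmf l q))"
    unfolding beta_def Q_def
    by (rule measure_pair_scaled_gcd_ne_le[OF finite_subset[OF set_pmf_pbd[of ps]] a q V]) simp
  then have "beta \<le> 31/32" using tv eps by linarith
  then have "beta ^ (m div 2) \<le> 32 * sqrt eps"
    using eps m by (intro power_half_samples_le_sqrt) (auto simp: beta_def)
  moreover have "measure_pmf.prob (Pi_pmf {..<m} 0 (\<lambda>_. Q)) {v. Gcd (v ` {..<m}) = a} \<ge> 1 - beta ^ (m div 2)"
    unfolding beta_def using a by (intro measure_Pi_pmf_Gcd_eq_ge) (auto simp: Q_def)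
  ultimately show ?thesis by (simp add: Q_def)
qed

theorem proposition54:
  fixes c0 :: real
  assumes "c0 > 0"
  shows "\<exists>eps0 > 0. \<exists>C > 0. \<exists>c1 > 0. \<forall>(eps::real) (ps::real list) (a::int) (b::int) (m::nat).
           0 < eps \<and> eps \<le> eps0 \<and> (\<forall>p\<in>set ps. 0 \<le> p \<and> p \<le> 1) \<and>
           heavy_binomial_form c0 eps (length ps) (pbd ps) \<and> a > 0 \<and> real m \<ge> c1 / sqrt eps \<longrightarrow>
           measure_pmf.prob
             (Pi_pmf {..<m} 0 (\<lambda>_. map_pmf (\<lambda>s. a * (int s - b)) (pbd ps)))
             {v. Gcd (v ` {..<m}) = a} \<ge> 1 - C * sqrt eps"
proof -
  define eps0 where "eps0 = min (1/64) (sqrt c0 / 2^60)"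
  have main: "measure_pmf.prob (Pi_pmf {..<m} 0 (\<lambda>_. map_pmf (\<lambda>s. a * (int s - b)) (pbd ps)))
      {v. Gcd (v ` {..<m}) = a} \<ge> 1 - 32 * sqrt eps"
    if "0 < eps" "eps \<le> eps0" "heavy_binomial_form c0 eps (length ps) (pbd ps)" "a > 0" "real m \<ge> 4 / sqrt eps"
    for eps ps a b m
    using that by (intro measure_Pi_pmf_pbd_Gcd_eq_ge[OF assms]) (auto simp: eps0_def)
  have "eps0 > 0" "(32::real) > 0" "(4::real) > 0" using assms by (simp_all add: eps0_def)
  then show ?thesis using main by blast
qed

end
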